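(* Let $G=(V,E)$ and $G'=(V',E')$ be undirected graphs. Then $\sigma(G\boxtimes G')=\sigma(G)\times\sigma(G')$, i.e. the semi-uniform structure $\mathcal{E}_{G\boxtimes G'}$ on $V\times V'$ coincides with the product semi-uniform structure $\mathcal{E}_G\times\mathcal{E}_{G'}$.
   Context: A semi-uniform structure on a set $X$ is a filter $\mathcal{U}$ on $X\times X$ (nonempty, not containing $\emptyset$, closed under supersets and finite intersections) such that every $U\in\mathcal{U}$ contains the diagonal and $U^{-1}\in\mathcal{U}$ for all $U\in\mathcal{U}$. For an undirected graph $G=(V,E)$, $\sigma(G)=(V,\mathcal{E}_G)$ where $\mathcal{E}_G$ is the filter on $V\times V$ generated by $E\cup\Delta_V$ (edges regarded as symmetric pairs). The strong graph product $G\boxtimes G'$ has vertex set $V\times V'$, and $((v_0,v_0'),(v_1,v_1'))$ is an edge iff either $(v_0,v_1)\in E$ and $(v_0',v_1')\in E'$, or $v_0=v_1$ and $(v_0',v_1')\in E'$, or $(v_0,v_1)\in E$ and $v_0'=v_1'$. For semi-uniform spaces $(X,\mathcal{U})$, $(Y,\mathcal{V})$, the product structure $\mathcal{U}\times\mathcal{V}$ on $X\times Y$ is the filter on $(X\times Y)\times(X\times Y)$ generated by the sets $\{((x_1,y_1),(x_2,y_2)):(x_1,x_2)\in U,(y_1,y_2)\in V\}$ with $U\in\mathcal{U}$, $V\in\mathcal{V}$. *)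

theory Defs
  imports Main
begin

text \<open>An undirected graph is represented by its vertex type 'a (vertex set = UNIV)
  and a symmetric edge relation E :: ('a \<times> 'a) set.
  A semi-uniform structure on a type 'a is a filter on 'a \<times> 'a.\<close>

definition graph_su :: "('a \<times> 'a) set \<Rightarrow> ('a \<times> 'a) filter" where
  "graph_su E = principal (E \<union> Id)"

definition strong_product ::
  "('a \<times> 'a) set \<Rightarrow> ('b \<times> 'b) set \<Rightarrow> (('a \<times> 'b) \<times> ('a \<times> 'b)) set" where
  "strong_product E E' = {((v0, v0'), (v1, v1')).
      ((v0, v1) \<in> E \<and> (v0', v1') \<in> E') \<or>
      (v0 = v1 \<and> (v0', v1') \<in> E') \<or>
      ((v0, v1) \<in> E \<and> v0' = v1')}"

definition prod_rel :: "('a \<times> 'a) set \<Rightarrow> ('b \<times> 'b) set \<Rightarrow> (('a \<times> 'b) \<times> ('a \<times> 'b)) set" where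
  "prod_rel U V = {((x1, y1), (x2, y2)). (x1, x2) \<in> U \<and> (y1, y2) \<in> V}"

text \<open>Product semi-uniform structure: the filter generated by all prod_rel U V,
  U in \<U>, V in \<V> (the infimum of principal filters is the generated filter).\<close>
definition su_product :: "('a \<times> 'a) filter \<Rightarrow> ('b \<times> 'b) filter \<Rightarrow> (('a \<times> 'b) \<times> ('a \<times> 'b)) filter" where
  "su_product \<U> \<V> = (INF UV \<in> {(U, V). eventually (\<lambda>p. p \<in> U) \<U> \<and> eventually (\<lambda>p. p \<in> V) \<V>}.
      principal (prod_rel (fst UV) (snd UV)))"

end

theory Submission
  imports Defs
begin

text \<open>Adding the diagonal turns the strong product into the product of the reflexive closures,
  and the product of two principal semi-uniformities is the principal one generated by the
  product of their generators.\<close>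

lemma strong_product_Un_Id:
  "strong_product E E' \<union> Id = prod_rel (E \<union> Id) (E' \<union> Id)"
  unfolding strong_product_def prod_rel_def by auto

lemma prod_rel_mono:
  assumes "U \<subseteq> U'" and "V \<subseteq> V'"
  shows "prod_rel U V \<subseteq> prod_rel U' V'"
  using assms unfolding prod_rel_def by auto

lemma su_product_principal:
  "su_product (principal U) (principal V) = principal (prod_rel U V)"
proof (rule antisym)
  show "su_product (principal U) (principal V) \<le> principal (prod_rel U V)"
    unfolding su_product_def
    by (rule INF_lower2[where i = "(U, V)"]) (auto simp: eventually_principal)
  show "principal (prod_rel U V) \<le> su_product (principal U) (principal V)"
    unfolding su_product_def
  proof (rule INF_greatest)
    fix UV
    assume "UV \<in> {(U', V'). eventually (\<lambda>p. p \<in> U') (principal U) \<and>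
                            eventually (\<lambda>p. p \<in> V') (principal V)}"
    then have "U \<subseteq> fst UV" and "V \<subseteq> snd UV"
      by (auto simp: eventually_principal)
    then show "principal (prod_rel U V) \<le> principal (prod_rel (fst UV) (snd UV))"
      by (simp add: prod_rel_mono)
  qed
qed

theorem proposition5p3:
  fixes E :: "('a \<times> 'a) set" and E' :: "('b \<times> 'b) set"
  assumes "sym E" and "sym E'"
  shows "graph_su (strong_product E E') = su_product (graph_su E) (graph_su E')"
  unfolding graph_su_def strong_product_Un_Id su_product_principal ..

end
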